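(* Let $a\in\mathbb{R}$ and let $\alpha_0,\alpha_1,\alpha_2,\alpha_3>0$ be fixed. For $b>a$, $A>0$, $B>0$ define \[ Q_0(x)=\begin{cases} A, & a\le x<b,\\ -B, & b\le x,\end{cases} \] and let $u$ be the solution of \[ u''''(x)+Q_0(x)u(x)=0,\qquad x>a, \] satisfying $u(a)=\alpha_0$, $u'(a)=\alpha_1$, $u''(a)=\alpha_2$, $u'''(a)=\alpha_3$. Then (given $a$) one can choose $b>a$, $A>0$ and $B>0$ such that \[ u'(\zeta)=u'''(\zeta)=0 \] for some $\zeta\in(b,\infty)$.
   Context: Since $Q_0$ is piecewise constant, the solution $u$ is understood as the function $u\in C^3[a,\infty)$ which satisfies the differential equation on each of the intervals $(a,b)$ and $(b,\infty)$ (equivalently, $u'''$ is absolutely continuous and the equation holds almost everywhere). *)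

theory Defs
  imports "HOL-Analysis.Analysis"
begin

definition Q0 :: "real \<Rightarrow> real \<Rightarrow> real \<Rightarrow> real \<Rightarrow> real" where
  "Q0 b A B x = (if x < b then A else - B)"

definition ode_solution ::
  "real \<Rightarrow> real \<Rightarrow> real \<Rightarrow> real \<Rightarrow> real \<Rightarrow> real \<Rightarrow> real \<Rightarrow> real \<Rightarrow>
   (real \<Rightarrow> real) \<Rightarrow> (real \<Rightarrow> real) \<Rightarrow> (real \<Rightarrow> real) \<Rightarrow> (real \<Rightarrow> real) \<Rightarrow> bool" where
  "ode_solution a b A B \<alpha>0 \<alpha>1 \<alpha>2 \<alpha>3 u u1 u2 u3 \<longleftrightarrow>
     (\<forall>x\<ge>a. (u has_real_derivative u1 x) (at x within {a..}) \<and>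
             (u1 has_real_derivative u2 x) (at x within {a..}) \<and>
             (u2 has_real_derivative u3 x) (at x within {a..})) \<and>
     continuous_on {a..} u3 \<and>
     (\<forall>x. a < x \<and> x \<noteq> b \<longrightarrow> (u3 has_real_derivative (- Q0 b A B x * u x)) (at x)) \<and>
     u a = \<alpha>0 \<and> u1 a = \<alpha>1 \<and> u2 a = \<alpha>2 \<and> u3 a = \<alpha>3"

end

theory Submission
  imports Defs
begin

text \<open>Take A = 4. On [a, b] the solution is then an explicit combination of cosh t cos t,
  cosh t sin t, sinh t cos t and sinh t sin t (t = x - a), independent of b, and we choose b as
  the first zero of its derivative: positivity of the data forces such a zero, and there
  u(b) > 0 and u'''(b) < 0. Beyond b, where u'''' = k^4 u with B = k^4, the combinations
  u''' + k^2 u' and u''' - k^2 u' evolve like cosh/sinh and cos/sin in k (x - b). Hence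
  u'(\<zeta>) = u'''(\<zeta>) = 0 at \<zeta> = b + x / k amounts to two transcendental equations in (k, x),
  which are solved by the intermediate value theorem.\<close>

definition solves_fourth_order ::
  "real \<Rightarrow> real set \<Rightarrow> (real \<Rightarrow> real) \<Rightarrow> (real \<Rightarrow> real) \<Rightarrow> (real \<Rightarrow> real) \<Rightarrow> (real \<Rightarrow> real) \<Rightarrow> bool"
  where
  "solves_fourth_order c S y0 y1 y2 y3 \<longleftrightarrow>
     (\<forall>x\<in>S. (y0 has_real_derivative y1 x) (at x) \<and> (y1 has_real_derivative y2 x) (at x) \<and>
            (y2 has_real_derivative y3 x) (at x) \<and> (y3 has_real_derivative c * y0 x) (at x))"

lemma solves_fourth_orderD:
  assumes "solves_fourth_order c S y0 y1 y2 y3" "x \<in> S"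
  shows "(y0 has_real_derivative y1 x) (at x)" "(y1 has_real_derivative y2 x) (at x)"
    "(y2 has_real_derivative y3 x) (at x)" "(y3 has_real_derivative c * y0 x) (at x)"
  using assms unfolding solves_fourth_order_def by auto

lemma solves_fourth_order_subset:
  "solves_fourth_order c S y0 y1 y2 y3 \<Longrightarrow> T \<subseteq> S \<Longrightarrow> solves_fourth_order c T y0 y1 y2 y3"
  unfolding solves_fourth_order_def by blast

lemma solves_fourth_order_diff:
  assumes "solves_fourth_order c S u0 u1 u2 u3" "solves_fourth_order c S w0 w1 w2 w3"
  shows "solves_fourth_order c S (\<lambda>x. u0 x - w0 x) (\<lambda>x. u1 x - w1 x) (\<lambda>x. u2 x - w2 x)
           (\<lambda>x. u3 x - w3 x)"
  using assms unfolding solves_fourth_order_def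
  by (auto intro!: derivative_eq_intros simp: right_diff_distrib)

lemma solves_fourth_order_continuous_on:
  assumes "solves_fourth_order c S y0 y1 y2 y3"
  shows "continuous_on S y0" "continuous_on S y1" "continuous_on S y2" "continuous_on S y3"
  using assms unfolding solves_fourth_order_def
  by (auto intro!: continuous_at_imp_continuous_on DERIV_isCont)

lemma DERIV_le_imp_le:
  fixes f g :: "real \<Rightarrow> real"
  assumes "a \<le> b" "f a \<le> g a"
    and "\<And>x. a \<le> x \<Longrightarrow> x \<le> b \<Longrightarrow> (f has_real_derivative f' x) (at x)"
    and "\<And>x. a \<le> x \<Longrightarrow> x \<le> b \<Longrightarrow> (g has_real_derivative g' x) (at x)"
    and "\<And>x. a \<le> x \<Longrightarrow> x \<le> b \<Longrightarrow> f' x \<le> g' x"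
  shows "f b \<le> g b"
proof -
  have "g a - f a \<le> g b - f b"
  proof (rule DERIV_nonneg_imp_nondecreasing[OF assms(1), of "\<lambda>x. g x - f x"])
    fix x assume x: "a \<le> x" "x \<le> b"
    have "((\<lambda>x. g x - f x) has_real_derivative g' x - f' x) (at x)"
      by (intro DERIV_diff assms(3,4)[OF x])
    moreover have "0 \<le> g' x - f' x" using assms(5)[OF x] by simp
    ultimately show "\<exists>y. ((\<lambda>x. g x - f x) has_real_derivative y) (at x) \<and> 0 \<le> y" by blast
  qed
  then show ?thesis using assms(2) by linarith
qed

lemma gronwall_zero:
  fixes E E' :: "real \<Rightarrow> real"
  assumes "a \<le> b" "continuous_on {a..b} E" "E a = 0"
    and deriv: "\<And>x. a < x \<Longrightarrow> x < b \<Longrightarrow> (E has_real_derivative E' x) (at x)"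
    and growth: "\<And>x. a < x \<Longrightarrow> x < b \<Longrightarrow> E' x \<le> L * E x"
  shows "E b \<le> 0"
proof -
  define F where "F x = - (E x * exp (- L * (x - a)))" for x
  have "F a \<le> F b"
  proof (rule DERIV_nonneg_imp_increasing_open[OF assms(1)])
    fix x assume x: "a < x" "x < b"
    have "(F has_real_derivative (L * E x - E' x) * exp (- L * (x - a))) (at x)"
      unfolding F_def by (rule derivative_eq_intros deriv[OF x] refl)+ (simp add: algebra_simps)
    moreover have "(L * E x - E' x) * exp (- L * (x - a)) \<ge> 0"
      using growth[OF x] by simp
    ultimately show "\<exists>y. (F has_real_derivative y) (at x) \<and> 0 \<le> y" by blast
  next
    show "continuous_on {a..b} F" unfolding F_def by (intro continuous_intros assms(2))
  qed
  then show ?thesis using assms(3) by (simp add: F_def mult_le_0_iff)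
qed

lemma energy_bound:
  fixes c y0 y1 y2 y3 :: real
  shows "2 * (y0 * y1 + y1 * y2 + y2 * y3 + c * y3 * y0) \<le> (2 + \<bar>c\<bar>) * (y0^2 + y1^2 + y2^2 + y3^2)"
proof -
  have sq: "2 * (x * y) \<le> x^2 + y^2" "\<bar>2 * (x * y)\<bar> \<le> x^2 + y^2" for x y :: real
  proof -
    have "0 \<le> (x - y)^2" "0 \<le> (x + y)^2" by simp_all
    then show "2 * (x * y) \<le> x^2 + y^2" "\<bar>2 * (x * y)\<bar> \<le> x^2 + y^2"
      by (auto simp: power2_eq_square algebra_simps abs_le_iff)
  qed
  have "c * (2 * (y3 * y0)) \<le> \<bar>c\<bar> * \<bar>2 * (y3 * y0)\<bar>"
    by (metis abs_ge_self abs_mult)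
  also have "\<dots> \<le> \<bar>c\<bar> * (y3^2 + y0^2)"
    using sq(2)[of y3 y0] by (intro mult_left_mono) auto
  finally have "c * (2 * (y3 * y0)) \<le> \<bar>c\<bar> * (y3^2 + y0^2)" .
  moreover have "0 \<le> \<bar>c\<bar> * y1^2" "0 \<le> \<bar>c\<bar> * y2^2" "0 \<le> y0^2" "0 \<le> y3^2" by simp_all
  moreover have "2 * (y0 * y1 + y1 * y2 + y2 * y3 + c * y3 * y0) =
      2 * (y0 * y1) + 2 * (y1 * y2) + 2 * (y2 * y3) + c * (2 * (y3 * y0))"
    by (simp add: algebra_simps)
  moreover have "(2 + \<bar>c\<bar>) * (y0^2 + y1^2 + y2^2 + y3^2) =
      (y0^2 + y1^2) + (y1^2 + y2^2) + (y2^2 + y3^2) + y0^2 + y3^2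
      + \<bar>c\<bar> * (y3^2 + y0^2) + \<bar>c\<bar> * y1^2 + \<bar>c\<bar> * y2^2"
    by (simp add: algebra_simps)
  ultimately show ?thesis
    using sq(1)[of y0 y1] sq(1)[of y1 y2] sq(1)[of y2 y3] by linarith
qed

lemma solves_fourth_order_zero_data:
  assumes "a \<le> b" and sol: "solves_fourth_order c {a<..<b} d0 d1 d2 d3"
    and cont: "continuous_on {a..b} d0" "continuous_on {a..b} d1" "continuous_on {a..b} d2"
      "continuous_on {a..b} d3"
    and "d0 a = 0" "d1 a = 0" "d2 a = 0" "d3 a = 0"
  shows "d0 b = 0 \<and> d1 b = 0 \<and> d2 b = 0 \<and> d3 b = 0"
proof -
  define E where "E x = (d0 x)^2 + (d1 x)^2 + (d2 x)^2 + (d3 x)^2" for x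
  have "E b \<le> 0"
  proof (rule gronwall_zero[OF \<open>a \<le> b\<close>, where L = "2 + \<bar>c\<bar>"
      and E' = "\<lambda>x. 2 * (d0 x * d1 x + d1 x * d2 x + d2 x * d3 x + c * d3 x * d0 x)"])
    show "continuous_on {a..b} E" unfolding E_def by (intro continuous_intros cont)
    show "E a = 0" unfolding E_def using assms(7-10) by simp
    fix x assume "a < x" "x < b"
    then have x: "x \<in> {a<..<b}" by simp
    show "(E has_real_derivative
        2 * (d0 x * d1 x + d1 x * d2 x + d2 x * d3 x + c * d3 x * d0 x)) (at x)"
      unfolding E_def
      by (rule derivative_eq_intros solves_fourth_orderD[OF sol x] refl)+ (simp add: algebra_simps)
    show "2 * (d0 x * d1 x + d1 x * d2 x + d2 x * d3 x + c * d3 x * d0 x) \<le> (2 + \<bar>c\<bar>) * E x"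
      unfolding E_def by (rule energy_bound)
  qed
  moreover have "0 \<le> (d0 b)^2" "0 \<le> (d1 b)^2" "0 \<le> (d2 b)^2" "0 \<le> (d3 b)^2" by simp_all
  ultimately show ?thesis unfolding E_def by (smt (verit) power2_less_eq_zero_iff)
qed

lemma solves_fourth_order_k4_first_integrals:
  fixes k :: real
  assumes "b < c" and sol: "solves_fourth_order (k^4) {b<..<c} y0 y1 y2 y3"
    and cont: "continuous_on {b..c} y0" "continuous_on {b..c} y1" "continuous_on {b..c} y2"
      "continuous_on {b..c} y3"
  shows "y3 c + k^2 * y1 c =
           (y3 b + k^2 * y1 b) * cosh (k * (c - b)) + (k * y2 b + k^3 * y0 b) * sinh (k * (c - b))"
    and "y3 c - k^2 * y1 c =
           (y3 b - k^2 * y1 b) * cos (k * (c - b)) + (k^3 * y0 b - k * y2 b) * sin (k * (c - b))"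
proof -
  have shift: "k * (b - c) = - (k * (c - b))" by (simp add: algebra_simps)
  define J1 where "J1 x = y3 x * cosh (k * (x - c)) - y2 x * k * sinh (k * (x - c))
      + y1 x * k^2 * cosh (k * (x - c)) - y0 x * k^3 * sinh (k * (x - c))" for x
  define J2 where "J2 x = y3 x * cos (k * (x - c)) + y2 x * k * sin (k * (x - c))
      - y1 x * k^2 * cos (k * (x - c)) - y0 x * k^3 * sin (k * (x - c))" for x
  have "J1 c = J1 b"
  proof (rule DERIV_isconst_end[OF \<open>b < c\<close>])
    show "continuous_on {b..c} J1" unfolding J1_def by (intro continuous_intros cont)
    fix x assume "b < x" "x < c"
    then have x: "x \<in> {b<..<c}" by simp
    show "(J1 has_real_derivative 0) (at x)" unfolding J1_def
      by (rule derivative_eq_intros solves_fourth_orderD[OF sol x] refl)+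
        (simp add: algebra_simps power_def)
  qed
  then show "y3 c + k^2 * y1 c =
      (y3 b + k^2 * y1 b) * cosh (k * (c - b)) + (k * y2 b + k^3 * y0 b) * sinh (k * (c - b))"
    unfolding J1_def shift cosh_minus sinh_minus by (simp add: algebra_simps)
  have "J2 c = J2 b"
  proof (rule DERIV_isconst_end[OF \<open>b < c\<close>])
    show "continuous_on {b..c} J2" unfolding J2_def by (intro continuous_intros cont)
    fix x assume "b < x" "x < c"
    then have x: "x \<in> {b<..<c}" by simp
    show "(J2 has_real_derivative 0) (at x)" unfolding J2_def
      by (rule derivative_eq_intros solves_fourth_orderD[OF sol x] refl)+
        (simp add: algebra_simps power_def)
  qed
  then show "y3 c - k^2 * y1 c =
      (y3 b - k^2 * y1 b) * cos (k * (c - b)) + (k^3 * y0 b - k * y2 b) * sin (k * (c - b))"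
    unfolding J2_def shift cos_minus sin_minus by (simp add: algebra_simps)
qed

lemma cubic_dominates:
  fixes a0 a1 a2 d :: real
  assumes "d > 0"
  shows "\<exists>t\<ge>0. a0 + a1 * t + a2 * t^2 < d * t^3"
proof -
  define M where "M = \<bar>a0\<bar> + \<bar>a1\<bar> + \<bar>a2\<bar>"
  define t where "t = 1 + M / d"
  have "M \<ge> 0" by (simp add: M_def)
  then have t: "1 \<le> t" "M < d * t" using assms by (simp_all add: t_def field_simps)
  then have "t \<le> t^2" by (simp add: power2_eq_square)
  have "1 \<le> t^2" using one_le_power[OF t(1)] .
  have "a0 + a1 * t + a2 * t^2 \<le> \<bar>a0\<bar> + \<bar>a1\<bar> * t + \<bar>a2\<bar> * t^2"
    using t by (intro add_mono mult_right_mono) auto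
  also have "\<dots> \<le> \<bar>a0\<bar> * t^2 + \<bar>a1\<bar> * t^2 + \<bar>a2\<bar> * t^2"
    using \<open>t \<le> t^2\<close> \<open>1 \<le> t^2\<close>
    by (intro add_mono mult_left_mono) (auto simp: mult_le_cancel_left1)
  also have "\<dots> = M * t^2" by (simp add: M_def algebra_simps)
  also have "\<dots> < d * t * t^2" using t by simp
  finally show ?thesis using t by (intro exI[of _ t]) (simp add: power3_eq_cube power2_eq_square)
qed

lemma first_zero:
  fixes f :: "real \<Rightarrow> real"
  assumes "a \<le> c" "continuous_on {a..c} f" "f a > 0" "f c \<le> 0"
  shows "\<exists>b\<in>{a<..c}. f b = 0 \<and> (\<forall>y\<in>{a..<b}. f y > 0)"
proof -
  define Z where "Z = {y \<in> {a..c}. f y = 0}"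
  have "Z \<noteq> {}" using IVT2'[of f c 0 a] assms unfolding Z_def by force
  moreover have Z_below: "bdd_below Z" unfolding Z_def by (rule bdd_belowI[of _ a]) auto
  moreover have "closed Z"
    unfolding Z_def by (rule continuous_closed_preimage_constant[OF assms(2)]) simp
  ultimately have "Inf Z \<in> Z" by (rule closed_contains_Inf)
  then have Inf: "a \<le> Inf Z" "Inf Z \<le> c" "f (Inf Z) = 0" unfolding Z_def by auto
  have "f y > 0" if y: "a \<le> y" "y < Inf Z" for y
  proof (rule ccontr)
    assume "\<not> f y > 0"
    moreover have "continuous_on {a..y} f"
      using assms(2) by (rule continuous_on_subset) (use y Inf in auto)
    ultimately obtain z where "a \<le> z" "z \<le> y" "f z = 0"
      using IVT2'[of f y 0 a] y assms(3) by (auto simp: not_less)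
    then have "z \<in> Z" using y Inf unfolding Z_def by auto
    then show False using cInf_lower[OF _ Z_below] \<open>z \<le> y\<close> \<open>y < Inf Z\<close> by fastforce
  qed
  moreover have "a < Inf Z" using Inf assms(3) by (cases "a = Inf Z") auto
  ultimately show ?thesis using Inf by auto
qed

lemma solves_fourth_order_derivative_nonpos:
  fixes A :: real
  assumes sol: "solves_fourth_order (- A) UNIV w0 w1 w2 w3" and "A > 0" "w0 a > 0"
  shows "\<exists>c\<ge>a. w1 c \<le> 0"
proof (rule ccontr)
  assume "\<not> (\<exists>c\<ge>a. w1 c \<le> 0)"
  then have w1_pos: "w1 x > 0" if "a \<le> x" for x
    using that by force
  note d = solves_fourth_orderD[OF sol UNIV_I]
  have w0_ge: "w0 a \<le> w0 x" if "a \<le> x" for x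
    by (rule DERIV_le_imp_le[OF that, where f = "\<lambda>_. w0 a" and f' = "\<lambda>_. 0" and g' = w1])
      (use d w1_pos in \<open>auto intro!: derivative_eq_intros simp: less_imp_le\<close>)
  define p3 where "p3 t = w3 a - A * w0 a * t" for t
  define p2 where "p2 t = w2 a + w3 a * t - A * w0 a * t^2 / 2" for t
  define p1 where "p1 t = w1 a + w2 a * t + w3 a * t^2 / 2 - A * w0 a * t^3 / 6" for t
  have w3_le: "w3 x \<le> p3 (x - a)" if "a \<le> x" for x
    by (rule DERIV_le_imp_le[OF that, where f' = "\<lambda>y. - A * w0 y" and g' = "\<lambda>_. - A * w0 a"])
      (use d w0_ge \<open>A > 0\<close> in \<open>auto simp: p3_def field_simps intro!: derivative_eq_intros\<close>)
  have w2_le: "w2 x \<le> p2 (x - a)" if "a \<le> x" for x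
    by (rule DERIV_le_imp_le[OF that, where f' = w3 and g' = "\<lambda>y. p3 (y - a)"])
      (use d w3_le in
        \<open>auto simp: p2_def p3_def field_simps power2_eq_square intro!: derivative_eq_intros\<close>)
  have w1_le: "w1 x \<le> p1 (x - a)" if "a \<le> x" for x
    by (rule DERIV_le_imp_le[OF that, where f' = w2 and g' = "\<lambda>y. p2 (y - a)"])
      (use d w2_le in \<open>auto simp: p1_def p2_def field_simps power2_eq_square power3_eq_cube
        intro!: derivative_eq_intros\<close>)
  have "A * w0 a / 6 > 0" using assms by simp
  then obtain t where "t \<ge> 0" "w1 a + w2 a * t + w3 a / 2 * t^2 < A * w0 a / 6 * t^3"
    by (blast dest: cubic_dominates)
  then have "p1 t < 0" by (simp add: p1_def)
  then show False using w1_le[of "a + t"] w1_pos[of "a + t"] \<open>t \<ge> 0\<close> by simp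
qed

lemma first_critical_point:
  fixes A :: real
  assumes sol: "solves_fourth_order (- A) UNIV w0 w1 w2 w3" and "A > 0"
    and data: "w0 a > 0" "w1 a > 0" "w2 a \<ge> 0"
  shows "\<exists>b>a. w1 b = 0 \<and> w0 b > 0 \<and> w3 b < 0"
proof -
  note d = solves_fourth_orderD[OF sol UNIV_I]
  obtain c where "a \<le> c" "w1 c \<le> 0"
    using solves_fourth_order_derivative_nonpos[OF sol \<open>A > 0\<close> data(1)] by blast
  moreover have "continuous_on {a..c} w1"
    using solves_fourth_order_continuous_on(2)[OF sol] by (rule continuous_on_subset) simp
  ultimately obtain b where b: "a < b" "w1 b = 0"
    and w1_pos: "\<And>y. a \<le> y \<Longrightarrow> y < b \<Longrightarrow> w1 y > 0"
    using first_zero[of a c w1] data(2) by force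
  have w1_nonneg: "0 \<le> w1 y" if "a \<le> y" "y \<le> b" for y
    using w1_pos[of y] b that by (cases "y = b") auto
  have w0_ge: "w0 a \<le> w0 y" if "a \<le> y" "y \<le> b" for y
    by (rule DERIV_le_imp_le[OF that(1), where f = "\<lambda>_. w0 a" and f' = "\<lambda>_. 0" and g' = w1])
      (use d w1_nonneg that in \<open>auto intro!: derivative_eq_intros\<close>)
  have "w3 b < 0"
  proof (rule ccontr)
    assume "\<not> w3 b < 0"
    have w3_nonneg: "0 \<le> w3 y" if "a \<le> y" "y \<le> b" for y
    proof -
      have "w3 b \<le> w3 y"
      proof (rule DERIV_le_imp_le[OF that(2), where f' = "\<lambda>x. - A * w0 x" and g' = "\<lambda>_. 0"])
        fix x assume "y \<le> x" "x \<le> b"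
        then show "- A * w0 x \<le> 0" using w0_ge[of x] that data \<open>A > 0\<close> by simp
      qed (use d in \<open>auto intro!: derivative_eq_intros\<close>)
      then show ?thesis using \<open>\<not> w3 b < 0\<close> by linarith
    qed
    have w2_nonneg: "0 \<le> w2 y" if "a \<le> y" "y \<le> b" for y
    proof -
      have "w2 a \<le> w2 y"
        by (rule DERIV_le_imp_le[OF that(1), where f = "\<lambda>_. w2 a" and f' = "\<lambda>_. 0" and g' = w3])
          (use d w3_nonneg that in \<open>auto intro!: derivative_eq_intros\<close>)
      then show ?thesis using data by linarith
    qed
    have "w1 a \<le> w1 b"
      by (rule DERIV_le_imp_le[of a b "\<lambda>_. w1 a" w1 "\<lambda>_. 0" w2])
        (use d w2_nonneg b in \<open>auto intro!: derivative_eq_intros\<close>)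
    then show False using b data by linarith
  qed
  then show ?thesis using b w0_ge[of b] data by force
qed

lemma odd_cubic_mono:
  fixes p r k k' :: real
  assumes "p \<ge> 0" "0 < k'" "k' \<le> k" "p * k'^3 + r * k' > 0"
  shows "p * k'^3 + r * k' \<le> p * k^3 + r * k"
proof -
  have "k' * (p * k'^2 + r) > 0" using assms(4) by (simp add: algebra_simps power_def)
  then have "p * k'^2 + r > 0" using assms(2) by (simp add: zero_less_mult_iff)
  moreover have "p * (k^2 + k * k') \<ge> 0" using assms by simp
  ultimately have "p * (k^2 + k * k' + k'^2) + r \<ge> 0" by (simp add: algebra_simps)
  then have "(k - k') * (p * (k^2 + k * k' + k'^2) + r) \<ge> 0"
    using assms(3) by simp
  moreover have "(k - k') * (p * (k^2 + k * k' + k'^2) + r) =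
      (p * k^3 + r * k) - (p * k'^3 + r * k')"
    by (simp add: algebra_simps power_def)
  ultimately show ?thesis by simp
qed

lemma odd_cubic_levels:
  fixes p r c c' :: real
  assumes "p > 0" "0 < c" "c < c'"
  obtains k k' where "0 < k" "k \<le> k'" "p * k^3 + r * k = c" "p * k'^3 + r * k' = c'"
    "\<And>x. k \<le> x \<Longrightarrow> c \<le> p * x^3 + r * x"
proof -
  define D where "D x = p * x^3 + r * x" for x
  have cont_D: "continuous_on S D" for S unfolding D_def by (intro continuous_intros)
  obtain K where "K \<ge> 0" "c' + (- r) * K + 0 * K^2 < p * K^3"
    using cubic_dominates[OF \<open>p > 0\<close>] by blast
  then have K: "K \<ge> 0" "c' \<le> D K" by (simp_all add: D_def)
  obtain k where k: "0 \<le> k" "k \<le> K" "D k = c"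
    using IVT'[of D 0 c K] K assms cont_D by (auto simp: D_def)
  obtain k' where "k \<le> k'" "D k' = c'"
    using IVT'[of D k c' K] K k assms cont_D by auto
  moreover have "0 < k" using k assms by (cases "k = 0") (auto simp: D_def)
  moreover have "c \<le> D x" if "k \<le> x" for x
    using odd_cubic_mono[of p k x r] \<open>0 < k\<close> k assms that by (auto simp: D_def)
  ultimately show ?thesis using that k unfolding D_def by blast
qed

lemma tanh_artanh_real:
  fixes y :: real
  assumes "y \<in> {-1<..<1}"
  shows "tanh (artanh y) = y"
proof -
  have "exp (- 2 * artanh y) = (1 - y) / (1 + y)"
    using assms by (simp add: artanh_def exp_minus)
  then have "tanh (artanh y) = (1 - (1 - y) / (1 + y)) / (1 + (1 - y) / (1 + y))"
    by (simp only: tanh_real_altdef)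
  also have "\<dots> = y"
    using assms by (simp add: field_simps)
  finally show ?thesis .
qed

text \<open>With D k = p k^3 + r k, the first equation holds along the curve x = artanh (-s / D k).
  On it x decreases from 2 pi to pi between the levels D k = -s / tanh (2 pi) and
  D k = -s / tanh pi, so the left-hand side of the second equation changes sign from s to -s.\<close>

lemma hyperbolic_trigonometric_solution:
  fixes p r s :: real
  assumes "p > 0" "s < 0"
  shows "\<exists>k x. k > 0 \<and> x > 0 \<and> s * cosh x + (p * k^3 + r * k) * sinh x = 0 \<and>
           s * cos x + (p * k^3 - r * k) * sin x = 0"
proof -
  define D where "D k = p * k^3 + r * k" for k
  define c1 where "c1 = - s / tanh pi"
  define c2 where "c2 = - s / tanh (2 * pi)"
  have "0 < tanh pi" "tanh pi < tanh (2 * pi)" "tanh (2 * pi) < 1"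
    using tanh_real_strict_mono tanh_real_lt_1 by (auto simp: strict_mono_less)
  then have c: "- s < c2" "c2 < c1"
    using \<open>s < 0\<close> by (auto simp: c1_def c2_def field_simps frac_less2)
  then obtain k2 k1 where k: "0 < k2" "k2 \<le> k1" "D k2 = c2" "D k1 = c1"
    and D_ge: "\<And>k. k2 \<le> k \<Longrightarrow> c2 \<le> D k"
    using odd_cubic_levels[OF \<open>p > 0\<close>, of c2 c1 r] \<open>s < 0\<close> unfolding D_def by auto
  define X where "X k = artanh (- s / D k)" for k
  have ratio: "- s / D k \<in> {-1<..<1}" "0 < - s / D k" if "k2 \<le> k" for k
    using D_ge[OF that] c \<open>s < 0\<close> by (auto simp: field_simps)
  have tanh_X: "tanh (X k) = - s / D k" if "k2 \<le> k" for k
    unfolding X_def using ratio(1)[OF that] by (rule tanh_artanh_real)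
  define G where "G k = s * cos (X k) + (p * k^3 - r * k) * sin (X k)" for k
  have "continuous_on {k2..k1} (\<lambda>k. - s / D k)"
    unfolding D_def by (intro continuous_intros) (use D_ge c \<open>s < 0\<close> in \<open>force simp: D_def\<close>)
  then have "continuous_on {k2..k1} X"
    unfolding X_def[abs_def] by (rule continuous_on_artanh') (use ratio in auto)
  then have "continuous_on {k2..k1} G"
    unfolding G_def[abs_def] by (intro continuous_intros)
  moreover have "X k1 = pi" "X k2 = 2 * pi"
    using k \<open>s < 0\<close> by (simp_all add: X_def c1_def c2_def artanh_tanh_real)
  then have "G k2 \<le> 0" "0 \<le> G k1" using \<open>s < 0\<close> by (simp_all add: G_def)
  ultimately obtain k where k': "k2 \<le> k" "k \<le> k1" "G k = 0"
    using IVT'[of G k2 0 k1] k by auto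
  have "0 < X k" using tanh_X[OF k'(1)] ratio(2)[OF k'(1)] tanh_real_pos_iff by metis
  moreover have "s * cosh (X k) + D k * sinh (X k) = 0"
    using tanh_X[OF k'(1)] D_ge[OF k'(1)] c \<open>s < 0\<close> unfolding tanh_def by (simp add: field_simps)
  ultimately show ?thesis
    using k k' unfolding G_def D_def by (intro exI[of _ k] exI[of _ "X k"]) auto
qed

text \<open>The functions cosh t cos t, (cosh t sin t + sinh t cos t)/2, sinh t sin t/2 and
  (cosh t sin t - sinh t cos t)/4 solve y'''' = -4y, and their derivatives of order 0..3 at 0
  form the identity matrix; so beam_sol c0 c1 c2 c3 is the solution with initial data c0..c3.\<close>

definition beam_sol :: "real \<Rightarrow> real \<Rightarrow> real \<Rightarrow> real \<Rightarrow> real \<Rightarrow> real" where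
  "beam_sol c0 c1 c2 c3 t =
     c0 * (cosh t * cos t) + c1 * (cosh t * sin t + sinh t * cos t) / 2
     + c2 * (sinh t * sin t) / 2 + c3 * (cosh t * sin t - sinh t * cos t) / 4"

lemma beam_sol_0 [simp]: "beam_sol c0 c1 c2 c3 0 = c0"
  by (simp add: beam_sol_def)

lemma beam_sol_has_real_derivative:
  "((\<lambda>x. beam_sol c0 c1 c2 c3 (x - a)) has_real_derivative beam_sol c1 c2 c3 (-4 * c0) (x - a))
     (at x)"
  unfolding beam_sol_def
  by (rule derivative_eq_intros refl | simp)+ (simp add: algebra_simps)

lemma beam_sol_solves:
  "solves_fourth_order (-4) UNIV
     (\<lambda>x. beam_sol c0 c1 c2 c3 (x - a)) (\<lambda>x. beam_sol c1 c2 c3 (-4 * c0) (x - a))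
     (\<lambda>x. beam_sol c2 c3 (-4 * c0) (-4 * c1) (x - a))
     (\<lambda>x. beam_sol c3 (-4 * c0) (-4 * c1) (-4 * c2) (x - a))"
proof -
  have scale: "beam_sol (-4 * c0) (-4 * c1) (-4 * c2) (-4 * c3) t = -4 * beam_sol c0 c1 c2 c3 t"
    for t by (simp add: beam_sol_def algebra_simps)
  have "((\<lambda>x. beam_sol c3 (-4 * c0) (-4 * c1) (-4 * c2) (x - a)) has_real_derivative
      -4 * beam_sol c0 c1 c2 c3 (x - a)) (at x)" for x
    using beam_sol_has_real_derivative[of c3 "-4 * c0" "-4 * c1" "-4 * c2" a x] unfolding scale .
  then show ?thesis
    unfolding solves_fourth_order_def using beam_sol_has_real_derivative by blast
qed

lemma ode_solution_continuous_on:
  assumes "ode_solution a b A B \<alpha>0 \<alpha>1 \<alpha>2 \<alpha>3 u u1 u2 u3"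
  shows "continuous_on {a..} u" "continuous_on {a..} u1" "continuous_on {a..} u2"
    "continuous_on {a..} u3"
  using assms unfolding ode_solution_def continuous_on_eq_continuous_within
  by (auto intro: DERIV_continuous)

lemma ode_solution_solves_pieces:
  assumes "ode_solution a b A B \<alpha>0 \<alpha>1 \<alpha>2 \<alpha>3 u u1 u2 u3" "a < b"
  shows "solves_fourth_order (- A) {a<..<b} u u1 u2 u3"
    and "solves_fourth_order B {b<..} u u1 u2 u3"
proof -
  have "at x within {a..} = at x" if "a < x" for x
    by (rule at_within_interior) (use that in simp)
  then have d: "(u has_real_derivative u1 x) (at x)" "(u1 has_real_derivative u2 x) (at x)"
      "(u2 has_real_derivative u3 x) (at x)" "(u3 has_real_derivative - Q0 b A B x * u x) (at x)"
    if "a < x" "x \<noteq> b" for x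
    using assms(1) that unfolding ode_solution_def by (metis less_imp_le)+
  have "(u3 has_real_derivative - A * u x) (at x)" if "a < x" "x < b" for x
    using d(4)[of x] that by (simp add: Q0_def)
  moreover have "(u3 has_real_derivative B * u x) (at x)" if "b < x" for x
    using d(4)[of x] that assms(2) by (simp add: Q0_def)
  ultimately show "solves_fourth_order (- A) {a<..<b} u u1 u2 u3"
    and "solves_fourth_order B {b<..} u u1 u2 u3"
    unfolding solves_fourth_order_def using d assms(2) by auto
qed

lemma ode_solution_before_switch:
  assumes ode: "ode_solution a b A B \<alpha>0 \<alpha>1 \<alpha>2 \<alpha>3 u u1 u2 u3" and "a < b"
    and sol: "solves_fourth_order (- A) UNIV w0 w1 w2 w3"
    and "w0 a = \<alpha>0" "w1 a = \<alpha>1" "w2 a = \<alpha>2" "w3 a = \<alpha>3"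
  shows "u b = w0 b \<and> u1 b = w1 b \<and> u2 b = w2 b \<and> u3 b = w3 b"
proof -
  have diff: "solves_fourth_order (- A) {a<..<b}
      (\<lambda>x. u x - w0 x) (\<lambda>x. u1 x - w1 x) (\<lambda>x. u2 x - w2 x) (\<lambda>x. u3 x - w3 x)"
    using ode_solution_solves_pieces(1)[OF ode \<open>a < b\<close>] solves_fourth_order_subset[OF sol]
    by (blast intro: solves_fourth_order_diff)
  have "{a..b} \<subseteq> {a..}" by auto
  note cont_u = ode_solution_continuous_on[OF ode, THEN continuous_on_subset, OF this]
  note cont_w = solves_fourth_order_continuous_on[OF sol, THEN continuous_on_subset, OF subset_UNIV]
  have "u a = \<alpha>0" "u1 a = \<alpha>1" "u2 a = \<alpha>2" "u3 a = \<alpha>3"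
    using ode unfolding ode_solution_def by auto
  then have "u b - w0 b = 0 \<and> u1 b - w1 b = 0 \<and> u2 b - w2 b = 0 \<and> u3 b - w3 b = 0"
    by (intro solves_fourth_order_zero_data[OF _ diff])
      (use cont_u cont_w assms(2,4-7) in \<open>auto intro: continuous_on_diff\<close>)
  then show ?thesis by simp
qed

lemma ode_solution_critical_after_switch:
  assumes ode: "ode_solution a b A (k^4) \<alpha>0 \<alpha>1 \<alpha>2 \<alpha>3 u u1 u2 u3" and "a < b"
    and "k > 0" "x > 0" "u1 b = 0"
    and "u3 b * cosh x + (u b * k^3 + u2 b * k) * sinh x = 0"
    and "u3 b * cos x + (u b * k^3 - u2 b * k) * sin x = 0"
  shows "u1 (b + x / k) = 0 \<and> u3 (b + x / k) = 0"
proof -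
  define c where "c = b + x / k"
  have "b < c" "k * (c - b) = x" using \<open>k > 0\<close> \<open>x > 0\<close> by (simp_all add: c_def)
  have sol: "solves_fourth_order (k^4) {b<..<c} u u1 u2 u3"
    using ode_solution_solves_pieces(2)[OF ode \<open>a < b\<close>] by (rule solves_fourth_order_subset) auto
  have "{b..c} \<subseteq> {a..}" using \<open>a < b\<close> by auto
  note cont = ode_solution_continuous_on[OF ode, THEN continuous_on_subset, OF this]
  note growth = solves_fourth_order_k4_first_integrals[OF \<open>b < c\<close> sol cont, unfolded \<open>k * (c - b) = x\<close>]
  have "u3 c + k^2 * u1 c = u3 b * cosh x + (u b * k^3 + u2 b * k) * sinh x"
    using growth(1) \<open>u1 b = 0\<close> by (simp add: algebra_simps)
  moreover have "u3 c - k^2 * u1 c = u3 b * cos x + (u b * k^3 - u2 b * k) * sin x"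
    using growth(2) \<open>u1 b = 0\<close> by (simp add: algebra_simps)
  ultimately have "u3 c + k^2 * u1 c = 0" "u3 c - k^2 * u1 c = 0" using assms(6,7) by simp_all
  then show ?thesis using \<open>k > 0\<close> by (simp add: c_def)
qed

theorem proposition1:
  fixes a \<alpha>0 \<alpha>1 \<alpha>2 \<alpha>3 :: real
  assumes "\<alpha>0 > 0" "\<alpha>1 > 0" "\<alpha>2 > 0" "\<alpha>3 > 0"
  shows "\<exists>b A B. b > a \<and> A > 0 \<and> B > 0 \<and>
           (\<forall>u u1 u2 u3. ode_solution a b A B \<alpha>0 \<alpha>1 \<alpha>2 \<alpha>3 u u1 u2 u3 \<longrightarrow>
              (\<exists>\<zeta>. \<zeta> > b \<and> u1 \<zeta> = 0 \<and> u3 \<zeta> = 0))"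
proof -
  define w0 where "w0 x = beam_sol \<alpha>0 \<alpha>1 \<alpha>2 \<alpha>3 (x - a)" for x
  define w1 where "w1 x = beam_sol \<alpha>1 \<alpha>2 \<alpha>3 (-4 * \<alpha>0) (x - a)" for x
  define w2 where "w2 x = beam_sol \<alpha>2 \<alpha>3 (-4 * \<alpha>0) (-4 * \<alpha>1) (x - a)" for x
  define w3 where "w3 x = beam_sol \<alpha>3 (-4 * \<alpha>0) (-4 * \<alpha>1) (-4 * \<alpha>2) (x - a)" for x
  have sol: "solves_fourth_order (- 4) UNIV w0 w1 w2 w3"
    unfolding w0_def w1_def w2_def w3_def by (rule beam_sol_solves)
  have data: "w0 a = \<alpha>0" "w1 a = \<alpha>1" "w2 a = \<alpha>2" "w3 a = \<alpha>3"
    by (simp_all add: w0_def w1_def w2_def w3_def)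
  have "\<exists>b>a. w1 b = 0 \<and> w0 b > 0 \<and> w3 b < 0"
    by (rule first_critical_point[OF sol]) (use assms data in auto)
  then obtain b where b: "b > a" "w1 b = 0" "w0 b > 0" "w3 b < 0" by blast
  obtain k x where kx: "k > 0" "x > 0"
    "w3 b * cosh x + (w0 b * k^3 + w2 b * k) * sinh x = 0"
    "w3 b * cos x + (w0 b * k^3 - w2 b * k) * sin x = 0"
    using hyperbolic_trigonometric_solution[OF b(3,4)] by blast
  show ?thesis
  proof (rule exI[of _ b], rule exI[of _ 4], rule exI[of _ "k^4"], intro conjI allI impI)
    fix u u1 u2 u3
    assume ode: "ode_solution a b 4 (k^4) \<alpha>0 \<alpha>1 \<alpha>2 \<alpha>3 u u1 u2 u3"
    then have "u b = w0 b \<and> u1 b = w1 b \<and> u2 b = w2 b \<and> u3 b = w3 b"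
      using ode_solution_before_switch[OF ode b(1) sol data] by simp
    then have "u1 (b + x / k) = 0 \<and> u3 (b + x / k) = 0"
      using ode_solution_critical_after_switch[OF ode b(1) kx(1,2)] b(2) kx(3,4) by simp
    then show "\<exists>\<zeta>>b. u1 \<zeta> = 0 \<and> u3 \<zeta> = 0"
      using kx by (intro exI[of _ "b + x / k"]) simp
  qed (use b kx in auto)
qed

end
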